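(* Let $n_1,\dots,n_d\ge 1$ and let $C\subseteq\mathrm{HS}(n_1,\dots,n_d)$ be a code with $M=|C|\ge 1$ codewords such that $d(x,y)\ge\delta$ for all distinct $x,y\in C$, where $\delta>0$. Put $r=1-\sum_{i=1}^d (d\,n_i)^{-1}$ and suppose $rd<\delta$. Then \[M\le\left\lfloor\frac{\delta}{\delta-rd}\right\rfloor.\]
   Context: For an integer $m$ let $[m]=\{0,\dots,m-1\}$. The cuboidal Hamming space $\mathrm{HS}(n_1,\dots,n_d)$ is $[n_1]\times\cdots\times[n_d]$ with Hamming distance $d(x,y)=|\{i:x_i\ne y_i\}|$. *)

theory Defs
  imports Main Complex_Main
begin

text \<open>The cuboidal Hamming space HS(n_1,...,n_d): words of length d (lists) whose
  i-th letter lies in [n_i] = {0..<n_i} (0-based index i < d).\<close>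
definition hamming_space :: "nat \<Rightarrow> (nat \<Rightarrow> nat) \<Rightarrow> nat list set" where
  "hamming_space d n = {x. length x = d \<and> (\<forall>i<d. x ! i < n i)}"

definition hamming_dist :: "nat list \<Rightarrow> nat list \<Rightarrow> nat" where
  "hamming_dist x y = card {i. i < length x \<and> x ! i \<noteq> y ! i}"

end

theory Submission
  imports Defs "HOL-Analysis.Convex"
begin

text \<open>Plotkin's double-counting argument. Summing the distances over all ordered pairs
  of codewords gives at least \<open>M (M - 1) \<delta>\<close>. Coordinatewise, if \<open>m\<^sub>a\<close> codewords carry
  the letter \<open>a\<close> in position \<open>i\<close>, then \<open>\<Sum>\<^sub>a m\<^sub>a\<^sup>2 \<ge> M\<^sup>2 / n\<^sub>i\<close> ordered pairs agree there, so
  the same sum is at most \<open>M\<^sup>2 \<Sum>\<^sub>i (1 - 1/n\<^sub>i) = M\<^sup>2 r d\<close>. Comparing the two bounds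
  gives \<open>M (\<delta> - r d) \<le> \<delta>\<close>.\<close>

lemma sum_card_fibres:
  assumes "finite C" "finite A" "f ` C \<subseteq> A"
  shows "(\<Sum>a\<in>A. card {x\<in>C. f x = a}) = card C"
  using sum.group[OF assms, of "\<lambda>_. 1::nat"] by simp

lemma sum_agreeing_pairs_eq_sum_fibre_squares:
  fixes f :: "'a \<Rightarrow> 'b"
  assumes "finite C" "finite A" "f ` C \<subseteq> A"
  shows "(\<Sum>x\<in>C. \<Sum>y\<in>C. of_bool (f x = f y) :: real) = (\<Sum>a\<in>A. real (card {x\<in>C. f x = a})^2)"
proof -
  have "(\<Sum>x\<in>C. \<Sum>y\<in>C. of_bool (f x = f y) :: real) = (\<Sum>x\<in>C. real (card {y\<in>C. f y = f x}))"
    using assms(1) by (intro sum.cong refl) (simp add: Int_def eq_commute conj_commute)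
  also have "\<dots> = (\<Sum>a\<in>A. \<Sum>x\<in>{x\<in>C. f x = a}. real (card {y\<in>C. f y = f x}))"
    by (rule sum.group[OF assms, symmetric])
  also have "\<dots> = (\<Sum>a\<in>A. real (card {x\<in>C. f x = a})^2)"
    by (intro sum.cong refl) (simp add: power2_eq_square)
  finally show ?thesis .
qed

lemma sum_disagreeing_pairs_le:
  fixes f :: "'a \<Rightarrow> 'b"
  assumes "finite C" "finite A" "A \<noteq> {}" "f ` C \<subseteq> A"
  shows "(\<Sum>x\<in>C. \<Sum>y\<in>C. of_bool (f x \<noteq> f y) :: real) \<le> real (card C)^2 * (1 - 1 / real (card A))"
proof -
  let ?agree = "\<Sum>x\<in>C. \<Sum>y\<in>C. of_bool (f x = f y) :: real"
  have "real (card C)^2 = (\<Sum>a\<in>A. real (card {x\<in>C. f x = a}))^2"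
    by (simp flip: sum_card_fibres[OF assms(1,2,4)])
  also have "\<dots> \<le> ?agree * real (card A)"
    unfolding sum_agreeing_pairs_eq_sum_fibre_squares[OF assms(1,2,4)] by (rule sum_squared_le_sum_of_squares)
  finally have "real (card C)^2 / real (card A) \<le> ?agree"
    using assms(2,3) by (simp add: divide_le_eq card_gt_0_iff)
  moreover have "(\<Sum>x\<in>C. \<Sum>y\<in>C. of_bool (f x \<noteq> f y) :: real) = real (card C)^2 - ?agree"
    by (simp add: of_bool_not_iff sum_subtractf power2_eq_square)
  ultimately show ?thesis by (simp add: algebra_simps)
qed

lemma hamming_dist_eq_sum:
  "real (hamming_dist x y) = (\<Sum>i<length x. of_bool (x ! i \<noteq> y ! i))"
proof -
  have "{i. i < length x \<and> x ! i \<noteq> y ! i} = {..<length x} \<inter> {i. x ! i \<noteq> y ! i}" by auto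
  then show ?thesis by (simp add: hamming_dist_def)
qed

lemma sum_pairwise_hamming_dist_le:
  assumes "finite C" "C \<subseteq> hamming_space d n" "\<forall>i<d. n i \<ge> 1"
  shows "(\<Sum>x\<in>C. \<Sum>y\<in>C. real (hamming_dist x y)) \<le> real (card C)^2 * (\<Sum>i<d. 1 - 1 / real (n i))"
proof -
  have "(\<Sum>x\<in>C. \<Sum>y\<in>C. real (hamming_dist x y)) = (\<Sum>x\<in>C. \<Sum>y\<in>C. \<Sum>i<d. of_bool (x ! i \<noteq> y ! i))"
    using assms(2) by (intro sum.cong refl) (auto simp: hamming_dist_eq_sum hamming_space_def)
  also have "\<dots> = (\<Sum>i<d. \<Sum>x\<in>C. \<Sum>y\<in>C. of_bool (x ! i \<noteq> y ! i))"
    by (simp only: sum.swap[where B = "{..<d}"])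
  also have "\<dots> \<le> (\<Sum>i<d. real (card C)^2 * (1 - 1 / real (card {..<n i})))"
  proof (rule sum_mono)
    fix i assume "i \<in> {..<d}"
    with assms(2,3) have "{..<n i} \<noteq> {}" "(\<lambda>x. x ! i) ` C \<subseteq> {..<n i}"
      by (auto simp: hamming_space_def lessThan_empty_iff)
    then show "(\<Sum>x\<in>C. \<Sum>y\<in>C. of_bool (x ! i \<noteq> y ! i)) \<le> real (card C)^2 * (1 - 1 / real (card {..<n i}))"
      by (rule sum_disagreeing_pairs_le[OF assms(1) finite_lessThan])
  qed
  finally show ?thesis by (simp add: sum_distrib_left)
qed

lemma sum_pairwise_ge_of_separated:
  fixes D :: "'a \<Rightarrow> 'a \<Rightarrow> real"
  assumes "finite C"
    and "\<forall>x\<in>C. \<forall>y\<in>C. x \<noteq> y \<longrightarrow> D x y \<ge> \<delta>" and "\<forall>x\<in>C. 0 \<le> D x x"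
  shows "real (card C) * (real (card C) - 1) * \<delta> \<le> (\<Sum>x\<in>C. \<Sum>y\<in>C. D x y)"
proof -
  have "(real (card C) - 1) * \<delta> \<le> (\<Sum>y\<in>C. D x y)" if "x \<in> C" for x
  proof -
    have "1 \<le> card C"
      using that assms(1) by (simp add: Suc_le_eq card_gt_0_iff) blast
    then have "(real (card C) - 1) * \<delta> = (\<Sum>y\<in>C - {x}. \<delta>)"
      using that assms(1) by (simp add: card_Diff_singleton of_nat_diff)
    also have "\<dots> \<le> (\<Sum>y\<in>C - {x}. D x y)"
      using that assms(2) by (intro sum_mono) auto
    also have "\<dots> \<le> (\<Sum>y\<in>C. D x y)"
      using sum.remove[OF assms(1) that, of "D x"] that assms(3) by simp
    finally show ?thesis .
  qed
  then have "(\<Sum>x\<in>C. (real (card C) - 1) * \<delta>) \<le> (\<Sum>x\<in>C. \<Sum>y\<in>C. D x y)"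
    by (rule sum_mono)
  then show ?thesis by (simp add: mult.assoc)
qed

theorem mainTheorem10:
  fixes d :: nat and n :: "nat \<Rightarrow> nat" and C :: "nat list set" and \<delta> r :: real
  assumes n_pos: "\<forall>i<d. n i \<ge> 1"
    and C_sub: "C \<subseteq> hamming_space d n"
    and C_ne: "card C \<ge> 1"
    and dist: "\<forall>x\<in>C. \<forall>y\<in>C. x \<noteq> y \<longrightarrow> real (hamming_dist x y) \<ge> \<delta>"
    and delta_pos: "\<delta> > 0"
    and r_def: "r = 1 - (\<Sum>i<d. 1 / (real d * real (n i)))"
    and rd: "r * real d < \<delta>"
  shows "card C \<le> \<lfloor>\<delta> / (\<delta> - r * real d)\<rfloor>"
proof -
  define M where "M = real (card C)"
  have fin: "finite C"
    using C_ne card.infinite by fastforce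
  have M_pos: "M > 0"
    using C_ne by (simp add: M_def)
  have "r * real d = (\<Sum>i<d. 1 - 1 / real (n i))"
  proof (cases "d = 0")
    case False
    then have "(\<Sum>i<d. 1 / (real d * real (n i))) * real d = (\<Sum>i<d. 1 / real (n i))"
      by (simp add: sum_distrib_right)
    then show ?thesis
      by (simp add: r_def left_diff_distrib sum_subtractf)
  qed simp
  then have "M * ((M - 1) * \<delta>) \<le> M * (M * (r * real d))"
    using sum_pairwise_ge_of_separated[OF fin dist] sum_pairwise_hamming_dist_le[OF fin C_sub n_pos]
    by (simp add: M_def hamming_dist_def power2_eq_square mult.assoc)
  then have "(M - 1) * \<delta> \<le> M * (r * real d)"
    using M_pos by simp
  then have "M * (\<delta> - r * real d) \<le> \<delta>"
    by (simp add: algebra_simps)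
  then have "M \<le> \<delta> / (\<delta> - r * real d)"
    using rd by (simp add: field_simps)
  then show ?thesis
    by (simp add: M_def le_floor_iff)
qed

end
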